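(* Let $V, W$ be real Banach spaces and let $T$ be a bijective bounded linear operator on $V$ with $T^k = I$ for some integer $k \ge 1$. Let $f: [0,\infty) \times V \to V$ satisfy, for some $\Delta t > 0$, $$f(t, Tu) = T f(t + \Delta t, u) \quad \text{for all } u \in V,\ t \ge 0.$$ Suppose there is $\Theta \in GL(V,W)$ and $\lambda < 0$ with $M^\Theta(f_t) \le \lambda$ for all $t \ge 0$. Then for every solution $u$ of $\dot u = f(t,u)$ there is a $k\Delta t$-periodic function $p: [0,\infty) \to V$ with $\|u(t) - p(t)\| \to 0$ as $t \to \infty$; namely $p(t) = \lim_{n \to \infty} u(t + nk\Delta t)$, and this limit exists for every $t \ge 0$.
   Context: For a real Banach space $X$, the right semi-inner product is $(a,b)_+ := \|a\| \lim_{h \to 0^+} \frac{\|a + hb\| - \|a\|}{h}$. For $\Theta \in GL(V,W)$ (a bijective bounded linear operator) and $g: V \to V$, $M^\Theta(g) := \sup_{u \ne v \in V} \frac{(\Theta(u-v), \Theta(g(u) - g(v)))_+}{\|\Theta(u-v)\|_W^2}$. We write $f_t = f(t,\cdot)$. Solutions are continuously differentiable curves $[0,\infty) \to V$ satisfying the equation for all $t \ge 0$. *)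

theory Defs
  imports "HOL-Analysis.Analysis"
begin

definition semi_inner_plus :: "'a::real_normed_vector \<Rightarrow> 'a \<Rightarrow> real" where
  "semi_inner_plus a b = norm a * Lim (at_right 0) (\<lambda>h::real. (norm (a + h *\<^sub>R b) - norm a) / h)"

text \<open>Logarithmic Lipschitz constant M^Theta(g), as an extended real supremum
  (so that an unbounded set of quotients gives +infinity).\<close>
definition M_Theta :: "('v::real_normed_vector \<Rightarrow> 'w::real_normed_vector) \<Rightarrow> ('v \<Rightarrow> 'v) \<Rightarrow> ereal" where
  "M_Theta \<Theta> g = (SUP (u, v) \<in> {(u, v). u \<noteq> v}.
      ereal (semi_inner_plus (\<Theta> (u - v)) (\<Theta> (g u - g v)) / (norm (\<Theta> (u - v)))\<^sup>2))"

end

theory Submission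
  imports Defs
begin

text \<open>Two solutions of \<open>u' = f t u\<close> approach each other like \<open>exp (lam * t)\<close> in the
  \<open>\<Theta>\<close>-norm: the right Dini derivative of \<open>\<parallel>\<Theta> (x t - y t)\<parallel>\<close> is bounded by the semi-inner
  product, hence by \<open>lam\<close> times the norm, and a Gronwall argument follows. The equivariance
  \<open>f t (T x) = T (f (t + \<Delta>t) x)\<close> together with \<open>T ^^ k = id\<close> makes \<open>f\<close> periodic in time with
  period \<open>P = k \<Delta>t\<close>, so \<open>u (t + P)\<close> is again a solution; consecutive shifts therefore differ by
  \<open>O(exp (lam * (t + n P)))\<close>, a geometric series whose sum gives the periodic limit \<open>p\<close>.
  The bounded inverse theorem converts the estimates back from \<open>W\<close> to \<open>V\<close>.\<close>

lemma norm_diff_quotient_mono: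
  fixes a b :: "'a::real_normed_vector"
  assumes "0 < h" "h \<le> h'"
  shows "(norm (a + h *\<^sub>R b) - norm a) / h \<le> (norm (a + h' *\<^sub>R b) - norm a) / h'"
proof -
  have h': "0 < h'" using assms by simp
  define c where "c = h / h'"
  have c: "0 < c" "c \<le> 1" using assms h' by (auto simp: c_def field_simps)
  have eq: "a + h *\<^sub>R b = (1 - c) *\<^sub>R a + c *\<^sub>R (a + h' *\<^sub>R b)"
    using h' by (simp add: c_def algebra_simps)
  have "norm (a + h *\<^sub>R b) \<le> (1 - c) * norm a + c * norm (a + h' *\<^sub>R b)"
    unfolding eq using c norm_triangle_ineq[of "(1 - c) *\<^sub>R a" "c *\<^sub>R (a + h' *\<^sub>R b)"]
    by simp
  hence "norm (a + h *\<^sub>R b) - norm a \<le> c * (norm (a + h' *\<^sub>R b) - norm a)"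
    by (simp add: algebra_simps)
  thus ?thesis using assms h' by (simp add: c_def field_simps)
qed

text \<open>The difference quotient is monotone and bounded below by \<open>-\<parallel>b\<parallel>\<close>, so the limit in the
  definition of \<open>semi_inner_plus\<close> exists (it is the infimum over \<open>h > 0\<close>).\<close>
lemma norm_diff_quotient_tendsto_Lim:
  fixes a b :: "'a::real_normed_vector"
  defines "q \<equiv> \<lambda>h::real. (norm (a + h *\<^sub>R b) - norm a) / h"
  shows "(q \<longlongrightarrow> Lim (at_right 0) q) (at_right 0)"
proof -
  define L where "L = Inf (q ` {0<..})"
  have "- norm b \<le> q h" if "h > 0" for h
  proof -
    have "norm a \<le> norm (a + h *\<^sub>R b) + norm (h *\<^sub>R b)"
      by (metis add_diff_cancel norm_triangle_ineq4)
    thus ?thesis using that by (simp add: q_def field_simps)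
  qed
  hence bdd: "bdd_below (q ` {0<..})" by (auto intro!: bdd_belowI[where m="- norm b"])
  have "(q \<longlongrightarrow> L) (at_right 0)"
  proof (rule order_tendstoI)
    fix y assume "y < L"
    hence "\<forall>h>0. y < q h" using bdd unfolding L_def by (meson cInf_lower greaterThan_iff
        image_eqI order.strict_trans2)
    thus "eventually (\<lambda>h. y < q h) (at_right 0)"
      unfolding eventually_at_right_field by (meson zero_less_one)
  next
    fix y assume "L < y"
    then obtain h0 where h0: "h0 > 0" "q h0 < y"
      using cInf_lessD[of "q ` {0<..}" y] unfolding L_def by auto
    have "q h < y" if "0 < h" "h < h0" for h
      using norm_diff_quotient_mono[of h h0 a b] that h0 unfolding q_def by linarith
    thus "eventually (\<lambda>h. q h < y) (at_right 0)"
      using h0 by (auto simp: eventually_at_right_field)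
  qed
  thus ?thesis by (simp add: tendsto_Lim trivial_limit_at_right_real)
qed

lemma semi_inner_plus_le_M_Theta:
  fixes \<Theta> :: "'v::real_normed_vector \<Rightarrow> 'w::real_normed_vector"
  assumes "linear \<Theta>" and "M_Theta \<Theta> g \<le> ereal lam"
  shows "semi_inner_plus (\<Theta> (x - y)) (\<Theta> (g x - g y)) \<le> lam * (norm (\<Theta> (x - y)))\<^sup>2"
proof (cases "\<Theta> (x - y) = 0")
  case True
  thus ?thesis by (simp add: semi_inner_plus_def)
next
  case False
  hence "x \<noteq> y" using linear_0[OF assms(1)] by auto
  hence "ereal (semi_inner_plus (\<Theta> (x - y)) (\<Theta> (g x - g y)) / (norm (\<Theta> (x - y)))\<^sup>2)
      \<le> M_Theta \<Theta> g"
    unfolding M_Theta_def by (intro SUP_upper2[where i="(x, y)"]) auto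
  also have "\<dots> \<le> ereal lam" by (rule assms(2))
  finally show ?thesis using False by (simp add: divide_le_eq)
qed

lemma norm_right_dini_le:
  fixes w :: "real \<Rightarrow> 'a::real_normed_vector"
  assumes w': "(w has_vector_derivative b) (at s within {s..})"
    and sip: "semi_inner_plus (w s) b \<le> lam * (norm (w s))\<^sup>2"
    and zero: "w s = 0 \<Longrightarrow> b = 0"
    and eps: "\<epsilon> > 0"
  shows "eventually (\<lambda>h. norm (w (s + h)) \<le> norm (w s) + h * (lam * norm (w s) + \<epsilon>)) (at_right 0)"
proof -
  define a where "a = w s"
  define q where "q = (\<lambda>h::real. (norm (a + h *\<^sub>R b) - norm a) / h)"
  define L where "L = Lim (at_right 0) q"
  have qL: "(q \<longlongrightarrow> L) (at_right 0)" unfolding L_def q_def by (rule norm_diff_quotient_tendsto_Lim)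
  have L_le: "L \<le> lam * norm a"
  proof (cases "a = 0")
    case True
    hence "q = (\<lambda>h. 0)" using zero by (simp add: a_def q_def fun_eq_iff)
    hence "L = 0" using qL by (metis tendsto_const tendsto_unique trivial_limit_at_right_real)
    thus ?thesis using True by simp
  next
    case False
    have "norm a * L \<le> lam * (norm a)\<^sup>2"
      using sip unfolding semi_inner_plus_def L_def q_def a_def .
    thus ?thesis using False by (simp add: power2_eq_square)
  qed
  have ev_q: "eventually (\<lambda>h. q h < L + \<epsilon>/2) (at_right 0)"
    using qL eps by (intro order_tendstoD(2)) auto
  obtain d where d: "d > 0"
    and dd: "\<And>z. z \<in> {s..} \<Longrightarrow> norm (z - s) < d \<Longrightarrow> norm (w z - a - (z - s) *\<^sub>R b) \<le> \<epsilon>/2 * norm (z - s)"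
    using w' eps unfolding has_vector_derivative_def has_derivative_within_alt a_def
    by (metis half_gt_zero)
  have ev_d: "eventually (\<lambda>h. 0 < h \<and> h < d) (at_right (0::real))"
    using d unfolding eventually_at_right_field by auto
  show ?thesis
    using ev_q ev_d
  proof eventually_elim
    case (elim h)
    have "norm (w (s + h)) \<le> norm (a + h *\<^sub>R b) + norm (w (s + h) - a - h *\<^sub>R b)"
      by (metis add.commute diff_add_cancel diff_diff_eq norm_triangle_ineq)
    also have "norm (a + h *\<^sub>R b) = norm a + h * q h" using elim by (simp add: q_def)
    also have "norm (w (s + h) - a - h *\<^sub>R b) \<le> \<epsilon>/2 * h" using dd[of "s + h"] elim by simp
    also have "h * q h \<le> h * (lam * norm a + \<epsilon>/2)"
      using elim L_le by (intro mult_left_mono) auto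
    finally show ?case by (simp add: a_def algebra_simps)
  qed
qed

text \<open>Proved by showing that the set where \<open>g s - \<epsilon> (s - a) \<le> g a\<close> has supremum \<open>b\<close>.\<close>
lemma le_of_right_dini_le_zero:
  fixes g :: "real \<Rightarrow> real"
  assumes ab: "a \<le> b" and cont: "continuous_on {a..b} g"
    and loc: "\<And>t \<epsilon>. t \<in> {a..<b} \<Longrightarrow> \<epsilon> > 0 \<Longrightarrow> eventually (\<lambda>h. g (t + h) \<le> g t + \<epsilon> * h) (at_right 0)"
  shows "g b \<le> g a"
proof -
  have main: "g b \<le> g a + \<epsilon> * (b - a)" if eps: "\<epsilon> > 0" for \<epsilon>
  proof -
    define S where "S = {a..b} \<inter> (\<lambda>s. g s - \<epsilon> * (s - a)) -` {..g a}"
    have "closed S" unfolding S_def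
      by (rule continuous_closed_preimage) (auto intro!: continuous_intros cont)
    moreover have S: "a \<in> S" "S \<subseteq> {a..b}" using ab by (auto simp: S_def)
    moreover have bdd: "bdd_above S" using S by (meson bdd_above_Icc bdd_above_mono)
    ultimately have cS: "Sup S \<in> S" using closed_contains_Sup by blast
    have "Sup S = b"
    proof (rule ccontr)
      assume "Sup S \<noteq> b"
      with cS S have c: "Sup S \<in> {a..<b}" by auto
      from loc[OF c eps] obtain d where d: "d > 0"
        and dd: "\<And>h. 0 < h \<Longrightarrow> h < d \<Longrightarrow> g (Sup S + h) \<le> g (Sup S) + \<epsilon> * h"
        unfolding eventually_at_right_field by auto
      define h where "h = min d (b - Sup S) / 2"
      have h: "0 < h" "h < d" "Sup S + h \<le> b" using d c by (auto simp: h_def min_def field_simps)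
      have "g (Sup S + h) \<le> g a + \<epsilon> * (Sup S - a) + \<epsilon> * h"
        using dd[OF h(1,2)] cS by (simp add: S_def)
      hence "Sup S + h \<in> S" using h c by (simp add: S_def algebra_simps)
      hence "Sup S + h \<le> Sup S" using bdd by (rule cSup_upper)
      thus False using h by simp
    qed
    thus ?thesis using cS by (simp add: S_def)
  qed
  have "g b \<le> g a + e" if "e > 0" for e
    using that ab main[of "e / (b - a)"] by (cases "a = b") auto
  thus ?thesis by (rule field_le_epsilon)
qed

lemma exp_scaled_right_dini_le:
  fixes \<phi> :: "real \<Rightarrow> real"
  assumes loc: "\<And>\<epsilon>. \<epsilon> > 0 \<Longrightarrow>
      eventually (\<lambda>h. \<phi> (s + h) \<le> \<phi> s + h * (lam * \<phi> s + \<epsilon>)) (at_right 0)"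
    and eps: "\<epsilon> > 0"
  shows "eventually (\<lambda>h. exp (- lam * (s + h)) * \<phi> (s + h) \<le> exp (- lam * s) * \<phi> s + \<epsilon> * h)
      (at_right 0)"
proof -
  define E where "E = exp (- lam * s)"
  define \<epsilon>' where "\<epsilon>' = \<epsilon> / (2 * E)"
  have E: "E > 0" and eps': "\<epsilon>' > 0" using eps by (simp_all add: E_def \<epsilon>'_def)
  define R where "R h = \<phi> s * ((exp (- lam * (s + h)) - E) / h) + exp (- lam * (s + h)) * (lam * \<phi> s + \<epsilon>')"
    for h
  have "((\<lambda>h. (exp (- lam * (s + h)) - E) / h) \<longlongrightarrow> E * (- lam)) (at_right 0)"
  proof -
    have "((\<lambda>x. exp (- lam * x)) has_real_derivative E * (- lam)) (at s)"
      unfolding E_def by (auto intro!: derivative_eq_intros)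
    thus ?thesis unfolding DERIV_def E_def by (rule tendsto_mono[OF at_le, rotated]) simp
  qed
  moreover have "((\<lambda>h. exp (- lam * (s + h))) \<longlongrightarrow> E) (at_right 0)"
    using tendsto_intros(1)[of "exp (- lam * s)"] unfolding E_def
    by (intro tendsto_eq_intros) auto
  ultimately have "(R \<longlongrightarrow> \<phi> s * (E * (- lam)) + E * (lam * \<phi> s + \<epsilon>')) (at_right 0)"
    unfolding R_def by (intro tendsto_intros)
  moreover have "\<phi> s * (E * (- lam)) + E * (lam * \<phi> s + \<epsilon>') = \<epsilon> / 2"
    using E by (simp add: \<epsilon>'_def algebra_simps)
  ultimately have "(R \<longlongrightarrow> \<epsilon> / 2) (at_right 0)" by metis
  hence "eventually (\<lambda>h. R h < \<epsilon>) (at_right 0)"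
    by (rule order_tendstoD(2)) (use eps in simp)
  moreover have "eventually (\<lambda>h. h > 0) (at_right (0::real))" by (simp add: eventually_at_right_less)
  ultimately show ?thesis
    using loc[OF eps']
  proof eventually_elim
    case (elim h)
    have "exp (- lam * (s + h)) * \<phi> (s + h) \<le> exp (- lam * (s + h)) * (\<phi> s + h * (lam * \<phi> s + \<epsilon>'))"
      using elim(3) by (simp add: mult_left_mono)
    also have "\<dots> = E * \<phi> s + h * R h"
      using elim(2) by (simp add: R_def field_simps)
    also have "\<dots> \<le> E * \<phi> s + \<epsilon> * h"
      using elim(1,2) by (simp add: mult.commute)
    finally show ?case by (simp add: E_def)
  qed
qed

lemma exp_bound_of_right_dini_le:
  fixes \<phi> :: "real \<Rightarrow> real"
  assumes cont: "continuous_on {0..} \<phi>"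
    and loc: "\<And>s \<epsilon>. s \<ge> 0 \<Longrightarrow> \<epsilon> > 0 \<Longrightarrow>
        eventually (\<lambda>h. \<phi> (s + h) \<le> \<phi> s + h * (lam * \<phi> s + \<epsilon>)) (at_right 0)"
    and t: "t \<ge> 0"
  shows "\<phi> t \<le> exp (lam * t) * \<phi> 0"
proof -
  have "exp (- lam * t) * \<phi> t \<le> exp (- lam * 0) * \<phi> 0"
  proof (rule le_of_right_dini_le_zero[OF t])
    show "continuous_on {0..t} (\<lambda>s. exp (- lam * s) * \<phi> s)"
      by (intro continuous_intros continuous_on_subset[OF cont]) auto
  qed (intro exp_scaled_right_dini_le loc; simp)
  thus ?thesis by (simp add: exp_minus field_simps)
qed

lemma M_Theta_contraction:
  fixes \<Theta> :: "'v::real_normed_vector \<Rightarrow> 'w::real_normed_vector" and f :: "real \<Rightarrow> 'v \<Rightarrow> 'v"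
  assumes lin: "bounded_linear \<Theta>" and inj: "inj \<Theta>"
    and M: "\<And>t. t \<ge> 0 \<Longrightarrow> M_Theta \<Theta> (f t) \<le> ereal lam"
    and x': "\<And>t. t \<ge> 0 \<Longrightarrow> (x has_vector_derivative f t (x t)) (at t within {0..})"
    and y': "\<And>t. t \<ge> 0 \<Longrightarrow> (y has_vector_derivative f t (y t)) (at t within {0..})"
    and t: "t \<ge> 0"
  shows "norm (\<Theta> (x t - y t)) \<le> exp (lam * t) * norm (\<Theta> (x 0 - y 0))"
proof -
  interpret \<Theta>: bounded_linear \<Theta> by (rule lin)
  define w where "w s = \<Theta> (x s - y s)" for s
  have w': "(w has_vector_derivative \<Theta> (f s (x s) - f s (y s))) (at s within {0..})" if "s \<ge> 0" for s
    unfolding w_def using x'[OF that] y'[OF that]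
    by (intro \<Theta>.has_vector_derivative has_vector_derivative_diff)
  show ?thesis
  proof (rule exp_bound_of_right_dini_le[of "\<lambda>s. norm (w s)", unfolded w_def, OF _ _ t])
    show "continuous_on {0..} (\<lambda>s. norm (\<Theta> (x s - y s)))"
      unfolding continuous_on_eq_continuous_within
      using continuous_norm[OF has_vector_derivative_continuous[OF w']] by (auto simp: w_def)
  next
    fix s \<epsilon> :: real assume s: "s \<ge> 0" and eps: "\<epsilon> > 0"
    have "\<Theta> (x s - y s) = 0 \<Longrightarrow> \<Theta> (f s (x s) - f s (y s)) = 0"
      using inj \<Theta>.zero by (metis injD right_minus_eq)
    thus "eventually (\<lambda>h. norm (\<Theta> (x (s + h) - y (s + h)))
        \<le> norm (\<Theta> (x s - y s)) + h * (lam * norm (\<Theta> (x s - y s)) + \<epsilon>)) (at_right 0)"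
      using norm_right_dini_le[of w _ s lam \<epsilon>] w'[OF s] s eps
        semi_inner_plus_le_M_Theta[OF \<Theta>.linear M[OF s]]
      by (auto simp: w_def intro: has_vector_derivative_within_subset)
  qed
qed

lemma Baire_ball_in_closure_image_cball:
  fixes \<Theta> :: "'v::real_normed_vector \<Rightarrow> 'w::banach"
  assumes surj: "surj \<Theta>"
  shows "\<exists>n::nat. \<exists>w0 \<epsilon>. \<epsilon> > 0 \<and> ball w0 \<epsilon> \<subseteq> closure (\<Theta> ` cball 0 (real n + 1))"
proof (rule ccontr)
  assume no_ball: "\<not> ?thesis"
  define G where "G = range (\<lambda>n::nat. closure (\<Theta> ` cball 0 (real n + 1)))"
  have "euclidean interior_of \<Union>G = {}"
  proof (rule Baire_category_alt)
    show "completely_metrizable_space (euclidean::'w topology) \<or>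
        locally_compact_space (euclidean::'w topology) \<and> regular_space (euclidean::'w topology)"
      using completely_metrizable_space_euclidean by blast
    show "countable G" unfolding G_def by simp
    fix C assume "C \<in> G"
    then obtain n where C: "C = closure (\<Theta> ` cball 0 (real n + 1))" unfolding G_def by auto
    have "interior C = {}"
    proof (rule ccontr)
      assume "interior C \<noteq> {}"
      then obtain w0 e where "e > 0" "ball w0 e \<subseteq> C" using mem_interior by blast
      thus False using no_ball C by blast
    qed
    thus "closedin euclidean C \<and> euclidean interior_of C = {}"
      unfolding C closed_closedin[symmetric] by simp
  qed
  moreover have "\<Union>G = UNIV"
  proof -
    have "w \<in> \<Union>G" for w
    proof -
      obtain x where x: "w = \<Theta> x" using surj by (metis surjD)
      obtain n :: nat where "norm x \<le> real n" using real_arch_simple by blast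
      hence "w \<in> closure (\<Theta> ` cball 0 (real n + 1))" using x closure_subset by fastforce
      thus ?thesis unfolding G_def by blast
    qed
    thus ?thesis by blast
  qed
  ultimately show False by simp
qed

text \<open>The approximate form of the open mapping theorem: the closure of the image of the unit
  ball contains a ball around \<open>0\<close>; the Baire ball around \<open>w0\<close> is moved to \<open>0\<close> by a difference of
  two approximations.\<close>
lemma surj_bounded_linear_approx_preimage:
  fixes \<Theta> :: "'v::real_normed_vector \<Rightarrow> 'w::banach"
  assumes lin: "bounded_linear \<Theta>" and surj: "surj \<Theta>"
  shows "\<exists>\<delta>>0. \<forall>y e. norm y < \<delta> \<longrightarrow> e > 0 \<longrightarrow> (\<exists>x. norm x \<le> 1 \<and> norm (y - \<Theta> x) < e)"
proof -
  interpret \<Theta>: bounded_linear \<Theta> by (rule lin)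
  obtain n :: nat and w0 \<epsilon> where eps: "\<epsilon> > 0"
    and ball: "ball w0 \<epsilon> \<subseteq> closure (\<Theta> ` cball 0 (real n + 1))"
    using Baire_ball_in_closure_image_cball[OF surj] by blast
  define N where "N = real n + 1"
  have N: "N > 0" by (simp add: N_def)
  have approx: "\<exists>x. norm x \<le> N \<and> norm (z - \<Theta> x) < e" if z: "z \<in> ball w0 \<epsilon>" and e: "e > 0"
    for z e
  proof -
    have "z \<in> closure (\<Theta> ` cball 0 N)" using ball z N_def by auto
    then obtain y where "y \<in> \<Theta> ` cball 0 N" "dist y z < e" using e closure_approachable by blast
    thus ?thesis by (auto simp: dist_norm norm_minus_commute)
  qed
  show ?thesis
  proof (intro exI[of _ "\<epsilon> / (2 * N)"] conjI allI impI)
    show "\<epsilon> / (2 * N) > 0" using eps N by simp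
    fix y :: 'w and e :: real assume y: "norm y < \<epsilon> / (2 * N)" and e: "e > 0"
    define y' where "y' = (2 * N) *\<^sub>R y"
    have "norm y' < \<epsilon>" using y N by (simp add: y'_def field_simps)
    hence "w0 + y' \<in> ball w0 \<epsilon>" "w0 \<in> ball w0 \<epsilon>" using eps by (auto simp: dist_norm)
    moreover have "e * N > 0" using e N by simp
    ultimately obtain x1 x2 where x1: "norm x1 \<le> N" "norm (w0 + y' - \<Theta> x1) < e * N"
      and x2: "norm x2 \<le> N" "norm (w0 - \<Theta> x2) < e * N"
      using approx by meson
    define x where "x = (1 / (2 * N)) *\<^sub>R (x1 - x2)"
    have "norm (x1 - x2) \<le> 2 * N" using x1 x2 norm_triangle_ineq4[of x1 x2] by simp
    moreover have "norm x = norm (x1 - x2) / (2 * N)" using N unfolding x_def norm_scaleR by simp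
    ultimately have "norm x \<le> 1" using N by (simp add: divide_le_eq)
    moreover have "norm (y - \<Theta> x) < e"
    proof -
      have "y - \<Theta> x = (1 / (2 * N)) *\<^sub>R ((w0 + y' - \<Theta> x1) - (w0 - \<Theta> x2))"
        using N by (simp add: x_def y'_def \<Theta>.scaleR \<Theta>.diff algebra_simps)
      hence "norm (y - \<Theta> x) = norm ((w0 + y' - \<Theta> x1) - (w0 - \<Theta> x2)) / (2 * N)"
        unfolding norm_scaleR using N by simp
      moreover have "norm ((w0 + y' - \<Theta> x1) - (w0 - \<Theta> x2)) < 2 * (e * N)"
        using x1 x2 norm_triangle_ineq4[of "w0 + y' - \<Theta> x1" "w0 - \<Theta> x2"] by simp
      ultimately show ?thesis using N by (simp add: divide_less_eq mult_ac)
    qed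
    ultimately show "\<exists>x. norm x \<le> 1 \<and> norm (y - \<Theta> x) < e" by blast
  qed
qed

lemma linear_approx_preimage_scaled:
  assumes "linear \<Theta>"
    and unit: "\<And>y e. norm y < \<delta> \<Longrightarrow> e > 0 \<Longrightarrow> \<exists>x. norm x \<le> 1 \<and> norm (y - \<Theta> x) < e"
    and "r > 0" "norm y < \<delta> * r" "e > 0"
  shows "\<exists>x. norm x \<le> r \<and> norm (y - \<Theta> x) < e"
proof -
  have "norm ((1 / r) *\<^sub>R y) < \<delta>" "e / r > 0" using assms(3-5) by (simp_all add: field_simps)
  then obtain x where x: "norm x \<le> 1" "norm ((1 / r) *\<^sub>R y - \<Theta> x) < e / r"
    using unit by blast
  have "y - \<Theta> (r *\<^sub>R x) = r *\<^sub>R ((1 / r) *\<^sub>R y - \<Theta> x)"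
    using assms(3) linear_scale[OF assms(1)] by (simp add: algebra_simps)
  hence "norm (y - \<Theta> (r *\<^sub>R x)) = r * norm ((1 / r) *\<^sub>R y - \<Theta> x)" using assms(3) by simp
  also have "\<dots> < e" using x(2) assms(3) by (simp add: field_simps)
  finally have "norm (y - \<Theta> (r *\<^sub>R x)) < e" .
  moreover have "norm (r *\<^sub>R x) \<le> r" using x assms(3) by (simp add: mult_left_le)
  ultimately show ?thesis by blast
qed

text \<open>Residuals of the successive approximation scheme: \<open>g n\<close> picks an approximate preimage
  of the current residual.\<close>
primrec correction_residual :: "(nat \<Rightarrow> 'w \<Rightarrow> 'v) \<Rightarrow> ('v \<Rightarrow> 'w::real_normed_vector) \<Rightarrow> 'w \<Rightarrow> nat \<Rightarrow> 'w"
where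
  "correction_residual g \<Theta> y 0 = y"
| "correction_residual g \<Theta> y (Suc n) =
    correction_residual g \<Theta> y n - \<Theta> (g n (correction_residual g \<Theta> y n))"

lemma bounded_linear_exact_preimage:
  fixes \<Theta> :: "'v::banach \<Rightarrow> 'w::real_normed_vector"
  assumes lin: "bounded_linear \<Theta>" and \<delta>: "\<delta> > 0"
    and approx: "\<And>y e r. r > 0 \<Longrightarrow> norm y < \<delta> * r \<Longrightarrow> e > 0 \<Longrightarrow> \<exists>x. norm x \<le> r \<and> norm (y - \<Theta> x) < e"
    and y: "norm y < \<delta>"
  shows "\<exists>x. norm x \<le> 2 \<and> \<Theta> x = y"
proof -
  interpret \<Theta>: bounded_linear \<Theta> by (rule lin)
  have "\<forall>m z. \<exists>x. norm z < \<delta> / 2^m \<longrightarrow> norm x \<le> 1 / 2^m \<and> norm (z - \<Theta> x) < \<delta> / 2^Suc m"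
  proof (intro allI)
    fix m z
    show "\<exists>x. norm z < \<delta> / 2^m \<longrightarrow> norm x \<le> 1 / 2^m \<and> norm (z - \<Theta> x) < \<delta> / 2^Suc m"
      using approx[of "1 / 2^m" z "\<delta> / 2^Suc m"] \<delta> by (cases "norm z < \<delta> / 2^m") auto
  qed
  then obtain g where g: "\<And>m z. norm z < \<delta> / 2^m \<Longrightarrow>
      norm (g m z) \<le> 1 / 2^m \<and> norm (z - \<Theta> (g m z)) < \<delta> / 2^Suc m"
    by metis
  define r where "r = correction_residual g \<Theta> y"
  define xs where "xs m = g m (r m)" for m
  have r_bound: "norm (r m) < \<delta> / 2^m" for m
    by (induction m) (use y g in \<open>auto simp: r_def\<close>)
  have xs_bound: "norm (xs m) \<le> (1/2)^m" for m
    using g[OF r_bound[of m]] by (simp add: xs_def power_one_over)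
  have r_eq: "r m = y - \<Theta> (\<Sum>i<m. xs i)" for m
    by (induction m) (simp_all add: r_def xs_def \<Theta>.add \<Theta>.diff \<Theta>.zero algebra_simps)
  have geom: "summable (\<lambda>m. (1/2::real)^m)" by simp
  have sum_xs: "summable xs" "summable (\<lambda>m. norm (xs m))"
    by (rule summable_comparison_test[OF _ geom]; use xs_bound in simp)+
  have "norm (suminf xs) \<le> (\<Sum>m. norm (xs m))" by (rule summable_norm[OF sum_xs(2)])
  also have "\<dots> \<le> (\<Sum>m. (1/2::real)^m)" by (rule suminf_le[OF xs_bound sum_xs(2) geom])
  also have "\<dots> = 2" by (simp add: suminf_geometric)
  finally have "norm (suminf xs) \<le> 2" .
  have "r \<longlonglongrightarrow> 0"
  proof (rule Lim_null_comparison[of _ "\<lambda>m. \<delta> * (1/2)^m"])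
    show "\<forall>\<^sub>F m in sequentially. norm (r m) \<le> \<delta> * (1/2)^m"
      using r_bound by (simp add: less_imp_le power_one_over)
    show "(\<lambda>m. \<delta> * (1/2)^m) \<longlonglongrightarrow> 0"
      using tendsto_mult_right_zero[OF LIMSEQ_power_zero[of "1/2::real"]] by simp
  qed
  hence "(\<lambda>m. y - r m) \<longlonglongrightarrow> y - 0" by (intro tendsto_intros)
  hence "(\<lambda>m. \<Theta> (\<Sum>i<m. xs i)) \<longlonglongrightarrow> y" by (simp add: r_eq)
  hence "\<Theta> (suminf xs) = y"
    using \<Theta>.tendsto[OF summable_LIMSEQ[OF sum_xs(1)]] LIMSEQ_unique by blast
  with \<open>norm (suminf xs) \<le> 2\<close> show ?thesis by blast
qed

lemma bounded_linear_bij_inverse_bound: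
  fixes \<Theta> :: "'v::banach \<Rightarrow> 'w::banach"
  assumes lin: "bounded_linear \<Theta>" and bij: "bij \<Theta>"
  shows "\<exists>C>0. \<forall>x. norm x \<le> C * norm (\<Theta> x)"
proof -
  interpret \<Theta>: bounded_linear \<Theta> by (rule lin)
  obtain \<delta> where \<delta>: "\<delta> > 0"
    and unit: "\<And>y e. norm y < \<delta> \<Longrightarrow> e > 0 \<Longrightarrow> \<exists>x. norm x \<le> 1 \<and> norm (y - \<Theta> x) < e"
    using surj_bounded_linear_approx_preimage[OF lin bij_is_surj[OF bij]] by blast
  have exact: "\<exists>X. norm X \<le> 2 \<and> \<Theta> X = y" if "norm y < \<delta>" for y
    using lin \<delta> linear_approx_preimage_scaled[OF \<Theta>.linear unit] that
    by (rule bounded_linear_exact_preimage)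
  show ?thesis
  proof (intro exI[of _ "4 / \<delta>"] conjI allI)
    show "4 / \<delta> > 0" using \<delta> by simp
    fix x
    show "norm x \<le> 4 / \<delta> * norm (\<Theta> x)"
    proof (cases "x = 0")
      case False
      hence "norm (\<Theta> x) > 0" using bij_is_inj[OF bij] \<Theta>.zero by (metis injD zero_less_norm_iff)
      define c where "c = \<delta> / (2 * norm (\<Theta> x))"
      have c: "c > 0" "norm (c *\<^sub>R \<Theta> x) < \<delta>"
        using \<open>norm (\<Theta> x) > 0\<close> \<delta> by (simp_all add: c_def)
      then obtain X where X: "norm X \<le> 2" "\<Theta> X = c *\<^sub>R \<Theta> x"
        using exact c(2) by blast
      hence "X = c *\<^sub>R x" using bij_is_inj[OF bij] by (simp add: \<Theta>.scaleR[symmetric] inj_eq)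
      hence "c * norm x \<le> 2" using X c by simp
      thus ?thesis using c \<delta> \<open>norm (\<Theta> x) > 0\<close> by (simp add: c_def field_simps)
    qed simp
  qed
qed

lemma equivariant_iterate:
  assumes equiv: "\<And>t x. t \<ge> 0 \<Longrightarrow> f t (T x) = T (f (t + \<Delta>t) x)"
    and dt: "\<Delta>t \<ge> 0" and t: "t \<ge> 0"
  shows "f t ((T ^^ j) x) = (T ^^ j) (f (t + real j * \<Delta>t) x)"
  using t
proof (induction j arbitrary: t)
  case (Suc j)
  have "f t ((T ^^ Suc j) x) = T (f (t + \<Delta>t) ((T ^^ j) x))" using equiv Suc.prems by simp
  also have "\<dots> = T ((T ^^ j) (f (t + \<Delta>t + real j * \<Delta>t) x))"
    using Suc.IH[of "t + \<Delta>t"] Suc.prems dt by simp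
  finally show ?case by (simp add: algebra_simps)
qed simp

lemma equivariant_periodic:
  assumes equiv: "\<And>t x. t \<ge> 0 \<Longrightarrow> f t (T x) = T (f (t + \<Delta>t) x)"
    and T_pow: "T ^^ k = id" and dt: "\<Delta>t \<ge> 0" and t: "t \<ge> 0"
  shows "f (t + real n * (real k * \<Delta>t)) x = f t x"
proof (induction n)
  case (Suc n)
  have "t + real n * (real k * \<Delta>t) \<ge> 0" using t dt by simp
  from equivariant_iterate[where f=f and T=T, OF equiv dt this, of k x] T_pow Suc.IH
  show ?case by (simp add: algebra_simps)
qed simp

lemma shift_solution:
  fixes u :: "real \<Rightarrow> 'v::real_normed_vector"
  assumes u': "\<And>t. t \<ge> 0 \<Longrightarrow> (u has_vector_derivative g t (u t)) (at t within {0..})"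
    and c: "c \<ge> 0" and s: "s \<ge> 0"
  shows "((\<lambda>s. u (s + c)) has_vector_derivative g (s + c) (u (s + c))) (at s within {0..})"
proof -
  have shift: "((\<lambda>s. s + c) has_vector_derivative 1) (at s within {0..})"
    by (auto intro!: derivative_eq_intros)
  have "(\<lambda>s. s + c) ` {0..} \<subseteq> {0..}" using c by auto
  hence "(u has_vector_derivative g (s + c) (u (s + c))) (at (s + c) within (\<lambda>s. s + c) ` {0..})"
    using u'[of "s + c"] c s by (auto intro: has_vector_derivative_within_subset)
  from vector_diff_chain_within[OF shift this] show ?thesis by (simp add: o_def)
qed

lemma geometric_increments_limit:
  fixes a :: "nat \<Rightarrow> 'a::banach"
  assumes incr: "\<And>i. norm (a (Suc i) - a i) \<le> c * \<rho>^i" and \<rho>: "0 \<le> \<rho>" "\<rho> < 1"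
  shows "\<exists>L. a \<longlonglongrightarrow> L \<and> norm (a 0 - L) \<le> c / (1 - \<rho>)"
proof -
  define d where "d i = a (Suc i) - a i" for i
  have geom: "summable (\<lambda>i. c * \<rho>^i)" using \<rho> by simp
  have sum_norm_d: "summable (\<lambda>i. norm (d i))"
    by (rule summable_comparison_test[OF _ geom]) (use incr in \<open>simp add: d_def\<close>)
  have "(\<lambda>n. a 0 + (\<Sum>i<n. d i)) \<longlonglongrightarrow> a 0 + suminf d"
    by (intro tendsto_add tendsto_const summable_LIMSEQ summable_norm_cancel[OF sum_norm_d])
  moreover have "(\<lambda>n. a 0 + (\<Sum>i<n. d i)) = a"
    by (rule ext) (simp add: d_def sum_lessThan_telescope)
  ultimately have "a \<longlonglongrightarrow> a 0 + suminf d" by simp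
  moreover have "norm (a 0 - (a 0 + suminf d)) \<le> c / (1 - \<rho>)"
  proof -
    have "norm (suminf d) \<le> (\<Sum>i. norm (d i))" by (rule summable_norm[OF sum_norm_d])
    also have "\<dots> \<le> (\<Sum>i. c * \<rho>^i)" by (rule suminf_le[OF _ sum_norm_d geom]) (use incr in \<open>simp add: d_def\<close>)
    also have "\<dots> = c / (1 - \<rho>)" using \<rho> by (simp add: suminf_mult suminf_geometric)
    finally show ?thesis by simp
  qed
  ultimately show ?thesis by blast
qed

lemma exp_mult_tendsto_zero_at_top:
  fixes lam :: real
  assumes "lam < 0"
  shows "((\<lambda>t. exp (lam * t)) \<longlongrightarrow> 0) at_top"
proof -
  have "filterlim (\<lambda>t. lam * t) at_bot at_top"
    by (rule filterlim_tendsto_neg_mult_at_bot[OF tendsto_const assms filterlim_ident])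
  thus ?thesis using exp_at_bot by (rule filterlim_compose[of exp, unfolded o_def, rotated])
qed

lemma periodic_limit_of_exp_decaying_increments:
  fixes u :: "real \<Rightarrow> 'a::banach"
  assumes P: "P > 0" and lam: "lam < 0"
    and incr: "\<And>t. t \<ge> 0 \<Longrightarrow> norm (u (t + P) - u t) \<le> B * exp (lam * t)"
  shows "\<exists>p. (\<forall>t\<ge>0. p (t + P) = p t)
           \<and> ((\<lambda>t. norm (u t - p t)) \<longlongrightarrow> 0) at_top
           \<and> (\<forall>t\<ge>0. (\<lambda>n. u (t + real n * P)) \<longlonglongrightarrow> p t)"
proof -
  define \<rho> where "\<rho> = exp (lam * P)"
  have \<rho>: "0 \<le> \<rho>" "\<rho> < 1" using lam P by (auto simp: \<rho>_def mult_neg_pos)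
  define p where "p t = lim (\<lambda>n. u (t + real n * P))" for t
  have lim: "(\<lambda>n. u (t + real n * P)) \<longlonglongrightarrow> p t"
    and remainder: "norm (u t - p t) \<le> B / (1 - \<rho>) * exp (lam * t)" if "t \<ge> 0" for t
  proof -
    have "norm (u (t + real (Suc i) * P) - u (t + real i * P)) \<le> B * exp (lam * t) * \<rho>^i" for i
    proof -
      have "norm (u (t + real (Suc i) * P) - u (t + real i * P)) \<le> B * exp (lam * (t + real i * P))"
        using incr[of "t + real i * P"] that P by (simp add: algebra_simps)
      also have "exp (lam * (t + real i * P)) = exp (lam * t) * \<rho>^i"
        by (simp add: \<rho>_def distrib_left exp_add exp_of_nat_mult[symmetric] mult_ac)
      finally show ?thesis by (simp add: mult_ac)
    qed
    from geometric_increments_limit[OF this \<rho>] obtain L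
      where "(\<lambda>n. u (t + real n * P)) \<longlonglongrightarrow> L" "norm (u t - L) \<le> B * exp (lam * t) / (1 - \<rho>)"
      by auto
    moreover from this(1) have "p t = L" unfolding p_def by (rule limI)
    ultimately show "(\<lambda>n. u (t + real n * P)) \<longlonglongrightarrow> p t"
      "norm (u t - p t) \<le> B / (1 - \<rho>) * exp (lam * t)" by simp_all
  qed
  have "p (t + P) = p t" if "t \<ge> 0" for t
  proof (rule LIMSEQ_unique)
    show "(\<lambda>n. u (t + real (Suc n) * P)) \<longlonglongrightarrow> p t" using LIMSEQ_Suc[OF lim[OF that]] .
    show "(\<lambda>n. u (t + real (Suc n) * P)) \<longlonglongrightarrow> p (t + P)"
      using lim[of "t + P"] that P by (simp add: algebra_simps)
  qed
  moreover have "((\<lambda>t. norm (u t - p t)) \<longlongrightarrow> 0) at_top"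
  proof (rule tendsto_sandwich[of "\<lambda>_. 0" _ _ "\<lambda>t. B / (1 - \<rho>) * exp (lam * t)"])
    show "eventually (\<lambda>t. norm (u t - p t) \<le> B / (1 - \<rho>) * exp (lam * t)) at_top"
      using eventually_ge_at_top[of "0::real"] by (rule eventually_mono) (rule remainder)
    show "((\<lambda>t. B / (1 - \<rho>) * exp (lam * t)) \<longlongrightarrow> 0) at_top"
      using tendsto_mult_right_zero[OF exp_mult_tendsto_zero_at_top[OF lam]] .
  qed auto
  ultimately show ?thesis using lim by blast
qed

theorem mainTheorem12:
  fixes T :: "'v::banach \<Rightarrow> 'v"
    and \<Theta> :: "'v \<Rightarrow> 'w::banach"
    and f :: "real \<Rightarrow> 'v \<Rightarrow> 'v"
    and k :: nat and \<Delta>t lam :: real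
    and u :: "real \<Rightarrow> 'v"
  assumes T_lin: "bounded_linear T" and T_bij: "bij T"
    and k_pos: "k \<ge> 1" and T_pow: "T ^^ k = id"
    and dt_pos: "\<Delta>t > 0"
    and f_equiv: "\<And>t x. t \<ge> 0 \<Longrightarrow> f t (T x) = T (f (t + \<Delta>t) x)"
    and Theta_lin: "bounded_linear \<Theta>" and Theta_bij: "bij \<Theta>"
    and lam_neg: "lam < 0"
    and M_bound: "\<And>t. t \<ge> 0 \<Longrightarrow> M_Theta \<Theta> (f t) \<le> ereal lam"
    and u_deriv: "\<And>t. t \<ge> 0 \<Longrightarrow> (u has_vector_derivative f t (u t)) (at t within {0..})"
    and u_C1: "continuous_on {0..} (\<lambda>t. f t (u t))"
  shows "\<exists>p :: real \<Rightarrow> 'v.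
           (\<forall>t\<ge>0. p (t + real k * \<Delta>t) = p t)
         \<and> ((\<lambda>t. norm (u t - p t)) \<longlongrightarrow> 0) at_top
         \<and> (\<forall>t\<ge>0. (\<lambda>n. u (t + real n * (real k * \<Delta>t))) \<longlonglongrightarrow> p t)"
proof -
  define P where "P = real k * \<Delta>t"
  have P: "P > 0" using k_pos dt_pos by (simp add: P_def)
  have shifted: "((\<lambda>s. u (s + P)) has_vector_derivative f s (u (s + P))) (at s within {0..})"
    if "s \<ge> 0" for s
    using shift_solution[where u=u and g=f, OF u_deriv _ that, of P] P
      equivariant_periodic[where f=f and T=T, OF f_equiv T_pow _ that, of 1] dt_pos
    by (simp add: P_def)
  obtain C where C: "C > 0" "\<And>x. norm x \<le> C * norm (\<Theta> x)"
    using bounded_linear_bij_inverse_bound[OF Theta_lin Theta_bij] by blast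
  define D where "D = norm (\<Theta> (u 0 - u (0 + P)))"
  have "norm (u (t + P) - u t) \<le> C * D * exp (lam * t)" if "t \<ge> 0" for t
  proof -
    have "norm (u (t + P) - u t) \<le> C * norm (\<Theta> (u t - u (t + P)))"
      using C(2)[of "u t - u (t + P)"] by (simp add: norm_minus_commute)
    also have "\<dots> \<le> C * (exp (lam * t) * D)" unfolding D_def
      using M_Theta_contraction[OF Theta_lin bij_is_inj[OF Theta_bij] M_bound u_deriv shifted that]
        C(1) by (intro mult_left_mono) auto
    finally show ?thesis by (simp add: mult_ac)
  qed
  from periodic_limit_of_exp_decaying_increments[OF P lam_neg this]
  show ?thesis unfolding P_def .
qed

end
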